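(* Let $\pi_n$ be a posterior density on $\Theta$, $f^*_{\hat\theta}$ a probability density symmetric about $\hat\theta\in\Theta$, and $$\mathcal{Q}=\{q_{\hat\theta}=2f^*_{\hat\theta}w_{\hat\theta}:\ w_{\hat\theta}(\theta)\in[0,1],\ w_{\hat\theta}(\theta)=1-w_{\hat\theta}(2\hat\theta-\theta)\ \forall\theta\}.$$ Then $q^*_{\hat\theta}=2f^*_{\hat\theta}w^*_{\hat\theta}\in\mathcal{Q}$ and $$q^*_{\hat\theta}\in\arg\min_{q_{\hat\theta}\in\mathcal{Q}}\mathcal{D}[\pi_n\,\|\,q_{\hat\theta}]$$ for every $\hat\theta\in\Theta$ and sample size $n$, where $\mathcal{D}$ is $\mathcal{D}_{TV}$ or any $\alpha$-divergence $\mathcal{D}_\alpha$, $\alpha\in\mathbb{R}\setminus\{0,1\}$.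
   Context: Posterior $\pi_n(\theta)=\pi(\theta)L(\theta;y_{1:n})/c(y_{1:n})$ on $\Theta\subseteq\mathbb{R}^d$, $\Theta$ symmetric about $\hat\theta$. Symmetric about $\hat\theta$ means $f(\theta)=f(2\hat\theta-\theta)$. Skewness-inducing factor: $w^*_{\hat\theta}(\theta)=\frac{\pi(\theta)L(\theta;y_{1:n})}{\pi(\theta)L(\theta;y_{1:n})+\pi(2\hat\theta-\theta)L(2\hat\theta-\theta;y_{1:n})}$, set to $1/2$ when numerator and denominator both vanish. $\mathcal{D}_{TV}[p\|q]=\tfrac12\int|p-q|$; $\mathcal{D}_\alpha[p\|q]=\frac{1}{\alpha(1-\alpha)}(1-\int p^\alpha q^{1-\alpha})$. *)

theory Defs
  imports "HOL-Analysis.Analysis"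
begin

definition refl_pt :: "'a::euclidean_space \<Rightarrow> 'a \<Rightarrow> 'a" where
  "refl_pt th t = (2::real) *\<^sub>R th - t"

definition posterior ::
  "'a::euclidean_space set \<Rightarrow> ('a \<Rightarrow> real) \<Rightarrow> ('a \<Rightarrow> real) \<Rightarrow> 'a \<Rightarrow> real" where
  "posterior \<Theta> prior L t =
     prior t * L t / enn2real (\<integral>\<^sup>+ x\<in>\<Theta>. ennreal (prior x * L x) \<partial>lborel)"

definition wstar ::
  "('a::euclidean_space \<Rightarrow> real) \<Rightarrow> ('a \<Rightarrow> real) \<Rightarrow> 'a \<Rightarrow> 'a \<Rightarrow> real" where
  "wstar prior L th t =
     (let a = prior t * L t; b = prior (refl_pt th t) * L (refl_pt th t)
      in if a = 0 \<and> a + b = 0 then 1/2 else a / (a + b))"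

definition skew_family ::
  "'a::euclidean_space set \<Rightarrow> 'a \<Rightarrow> ('a \<Rightarrow> real) \<Rightarrow> ('a \<Rightarrow> real) set" where
  "skew_family \<Theta> th f =
     {q. \<exists>w. w \<in> borel_measurable lborel \<and>
            (\<forall>t\<in>\<Theta>. 0 \<le> w t \<and> w t \<le> 1 \<and> w t = 1 - w (refl_pt th t)) \<and>
            (\<forall>t\<in>\<Theta>. q t = 2 * f t * w t)}"

definition D_TV :: "'a::euclidean_space set \<Rightarrow> ('a \<Rightarrow> real) \<Rightarrow> ('a \<Rightarrow> real) \<Rightarrow> ereal" where
  "D_TV \<Theta> p q = ereal (1/2) * enn2ereal (\<integral>\<^sup>+ t\<in>\<Theta>. ennreal \<bar>p t - q t\<bar> \<partial>lborel)"

text \<open>Integrand a^alpha b^(1-alpha) for a, b >= 0, extended by its limiting values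
  (0^alpha = infinity for alpha < 0, 0^(1-alpha) = infinity for alpha > 1, and 0 at a = b = 0).\<close>
definition alpha_integrand :: "real \<Rightarrow> real \<Rightarrow> real \<Rightarrow> ennreal" where
  "alpha_integrand \<alpha> a b =
     (if 0 < a \<and> 0 < b then ennreal (a powr \<alpha> * b powr (1 - \<alpha>))
      else if a = 0 \<and> b = 0 then 0
      else if a = 0 then (if \<alpha> < 0 then \<infinity> else 0)
      else (if 1 < \<alpha> then \<infinity> else 0))"

definition D_alpha ::
  "real \<Rightarrow> 'a::euclidean_space set \<Rightarrow> ('a \<Rightarrow> real) \<Rightarrow> ('a \<Rightarrow> real) \<Rightarrow> ereal" where
  "D_alpha \<alpha> \<Theta> p q =
     ereal (1 / (\<alpha> * (1 - \<alpha>))) *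
     (1 - enn2ereal (\<integral>\<^sup>+ t\<in>\<Theta>. alpha_integrand \<alpha> (p t) (q t) \<partial>lborel))"

end

theory Submission
  imports Defs
begin

text \<open>Reflection \<open>t \<mapsto> 2\<theta> - t\<close> preserves Lebesgue measure and \<open>\<Theta>\<close>, so an integral over \<open>\<Theta>\<close>
  is half the integral of \<open>g t + g (2\<theta> - t)\<close>, and it suffices to compare divergence integrands on
  each pair of reflected points. There \<open>f\<close> takes one value, so with \<open>c = 2 f(t)\<close>, \<open>p = \<pi>\<^sub>n(t)\<close>,
  \<open>p' = \<pi>\<^sub>n(2\<theta> - t)\<close> one must choose \<open>w \<in> [0,1]\<close> to optimise the two-point sum
  \<open>G(p, c w) + G(p', c (1 - w))\<close>. For total variation the triangle inequality bounds it below by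
  \<open>|p + p' - c|\<close>; for \<open>\<alpha>\<close>-divergences the affinity \<open>p\<^sup>\<alpha> q\<^sup>1\<^sup>-\<^sup>\<alpha>\<close> is 1-homogeneous and concave
  (\<open>0 < \<alpha> < 1\<close>) or convex (otherwise), so the sum is bounded by \<open>(p + p')\<^sup>\<alpha> c\<^sup>1\<^sup>-\<^sup>\<alpha>\<close>.
  Both bounds are attained by the proportional split \<open>w = p / (p + p')\<close>, which is \<open>w\<^sup>*\<close>.\<close>

lemma refl_pt_refl_pt [simp]: "refl_pt th (refl_pt th t) = t"
  by (simp add: refl_pt_def)

lemma measurable_refl_pt [measurable]: "refl_pt th \<in> borel_measurable borel"
  unfolding refl_pt_def by measurable

lemma distr_lborel_refl_pt: "distr lborel borel (refl_pt th) = (lborel :: 'a::euclidean_space measure)"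
proof -
  have "refl_pt th = (\<lambda>x::'a. (2::real) *\<^sub>R th + (-1::real) *\<^sub>R x)"
    by (auto simp: refl_pt_def)
  then show ?thesis
    using lborel_affine[of "-1::real" "(2::real) *\<^sub>R th"] by (simp add: density_1)
qed

locale reflection_symmetric =
  fixes \<Theta> :: "'a::euclidean_space set" and th :: 'a
  assumes sets_\<Theta>: "\<Theta> \<in> sets lborel"
    and refl_pt_mem: "t \<in> \<Theta> \<Longrightarrow> refl_pt th t \<in> \<Theta>"
begin

lemma sets_borel_\<Theta> [measurable]: "\<Theta> \<in> sets borel"
  using sets_\<Theta> by simp

lemma indicator_refl_pt: "indicator \<Theta> (refl_pt th t) = (indicator \<Theta> t :: ennreal)"
  using refl_pt_mem by (metis indicator_simps refl_pt_refl_pt)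

lemma nn_integral_refl_pt:
  assumes [measurable]: "g \<in> borel_measurable borel"
  shows "(\<integral>\<^sup>+ t\<in>\<Theta>. g (refl_pt th t) \<partial>lborel) = (\<integral>\<^sup>+ t\<in>\<Theta>. g t \<partial>lborel)"
proof -
  have "(\<integral>\<^sup>+ t\<in>\<Theta>. g t \<partial>lborel) = (\<integral>\<^sup>+ t. g t * indicator \<Theta> t \<partial>distr lborel borel (refl_pt th))"
    by (simp add: distr_lborel_refl_pt)
  also have "\<dots> = (\<integral>\<^sup>+ t. g (refl_pt th t) * indicator \<Theta> (refl_pt th t) \<partial>lborel)"
    by (rule nn_integral_distr) auto
  finally show ?thesis
    by (simp add: indicator_refl_pt)
qed

lemma nn_integral_refl_pt_pairs:
  assumes [measurable]: "g \<in> borel_measurable borel"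
  shows "(\<integral>\<^sup>+ t\<in>\<Theta>. (g t + g (refl_pt th t)) \<partial>lborel) = 2 * (\<integral>\<^sup>+ t\<in>\<Theta>. g t \<partial>lborel)"
proof -
  have "(\<integral>\<^sup>+ t\<in>\<Theta>. (g t + g (refl_pt th t)) \<partial>lborel)
      = (\<integral>\<^sup>+ t. g t * indicator \<Theta> t + g (refl_pt th t) * indicator \<Theta> t \<partial>lborel)"
    by (intro nn_integral_cong) (simp add: distrib_right)
  also have "\<dots> = (\<integral>\<^sup>+ t\<in>\<Theta>. g t \<partial>lborel) + (\<integral>\<^sup>+ t\<in>\<Theta>. g (refl_pt th t) \<partial>lborel)"
    by (rule nn_integral_add) auto
  finally show ?thesis
    by (simp add: nn_integral_refl_pt mult_2)
qed

lemma set_nn_integral_le_by_refl_pt_pairs: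
  assumes [measurable]: "g \<in> borel_measurable borel" "h \<in> borel_measurable borel"
    and pair_le: "\<And>t. t \<in> \<Theta> \<Longrightarrow> g t + g (refl_pt th t) \<le> h t + h (refl_pt th t)"
  shows "(\<integral>\<^sup>+ t\<in>\<Theta>. g t \<partial>lborel) \<le> (\<integral>\<^sup>+ t\<in>\<Theta>. h t \<partial>lborel)"
proof -
  have "(\<integral>\<^sup>+ t\<in>\<Theta>. (g t + g (refl_pt th t)) \<partial>lborel) \<le> (\<integral>\<^sup>+ t\<in>\<Theta>. (h t + h (refl_pt th t)) \<partial>lborel)"
    by (intro nn_integral_mono) (auto simp: indicator_def pair_le)
  then show ?thesis
    by (simp add: nn_integral_refl_pt_pairs ennreal_mult_le_mult_iff)
qed

end

definition skew_weight :: "real \<Rightarrow> real \<Rightarrow> real" where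
  "skew_weight p p' = (if p = 0 \<and> p + p' = 0 then 1/2 else p / (p + p'))"

lemma skew_weight_divide: "c \<noteq> 0 \<Longrightarrow> skew_weight (p / c) (p' / c) = skew_weight p p'"
  by (auto simp: skew_weight_def add_divide_distrib[symmetric])

lemma skew_weight_swap: "0 \<le> p \<Longrightarrow> 0 \<le> p' \<Longrightarrow> skew_weight p' p = 1 - skew_weight p p'"
  by (cases "p + p' = 0") (auto simp: skew_weight_def field_simps)

lemma skew_weight_bounds: "0 \<le> p \<Longrightarrow> 0 \<le> p' \<Longrightarrow> 0 \<le> skew_weight p p' \<and> skew_weight p p' \<le> 1"
  by (auto simp: skew_weight_def field_simps)

lemma skew_weight_proportional:
  "0 \<le> p \<Longrightarrow> 0 \<le> p' \<Longrightarrow> 0 < p + p' \<Longrightarrow>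
    skew_weight p p' = p / (p + p') \<and> 1 - skew_weight p p' = p' / (p + p')"
  by (auto simp: skew_weight_def field_simps)

lemma measurable_skew_weight [measurable]:
  assumes [measurable]: "g \<in> borel_measurable M" "h \<in> borel_measurable M"
  shows "(\<lambda>t. skew_weight (g t) (h t)) \<in> borel_measurable M"
  unfolding skew_weight_def by measurable

lemma abs_pair_skew_weight_le:
  fixes c p p' w :: real
  assumes "0 \<le> p" "0 \<le> p'"
  shows "\<bar>p - c * skew_weight p p'\<bar> + \<bar>p' - c * (1 - skew_weight p p')\<bar>
       \<le> \<bar>p - c * w\<bar> + \<bar>p' - c * (1 - w)\<bar>"
proof -
  have "\<bar>p - c * skew_weight p p'\<bar> + \<bar>p' - c * (1 - skew_weight p p')\<bar> = \<bar>p + p' - c\<bar>"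
  proof (cases "p + p' = 0")
    case True
    then show ?thesis using assms by (simp add: skew_weight_def)
  next
    case False
    then have s: "0 < p + p'" using assms by simp
    have "p - c * skew_weight p p' = p / (p + p') * (p + p' - c)"
      "p' - c * (1 - skew_weight p p') = p' / (p + p') * (p + p' - c)"
      using skew_weight_proportional[OF assms s] s by (simp_all add: field_simps)
    then show ?thesis
      using assms s by (simp add: abs_mult add_divide_distrib[symmetric] distrib_right[symmetric])
  qed
  also have "\<dots> \<le> \<bar>p - c * w\<bar> + \<bar>p' - c * (1 - w)\<bar>"
    using abs_triangle_ineq[of "p - c * w" "p' - c * (1 - w)"] by (simp add: algebra_simps)
  finally show ?thesis .
qed

lemma ennreal_plus_le: "ennreal (x + y) \<le> ennreal x + ennreal y"
  by (cases "0 \<le> x"; cases "0 \<le> y") (auto simp: ennreal_neg intro: ennreal_leI add_increasing2)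

text \<open>For \<open>a > 1\<close>, Young's inequality with exponent \<open>1/a\<close> applied to \<open>u = x\<^sup>a y\<^sup>1\<^sup>-\<^sup>a\<close> and \<open>y\<close>
  gives back \<open>x\<close>; the case \<open>a < 0\<close> is the case \<open>1 - a > 1\<close> with \<open>x\<close> and \<open>y\<close> exchanged.\<close>

lemma Youngs_inequality_reverse:
  fixes a x y :: real
  assumes a: "a < 0 \<or> 1 < a" and "0 < x" "0 < y"
  shows "a * x + (1 - a) * y \<le> x powr a * y powr (1 - a)"
proof -
  have gt1: "a * x + (1 - a) * y \<le> x powr a * y powr (1 - a)"
    if "1 < a" "0 < x" "0 < y" for a x y :: real
  proof -
    define u where "u = x powr a * y powr (1 - a)"
    have "0 < u" using that by (simp add: u_def)
    have "u powr (1/a) * y powr (1 - 1/a) = x"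
    proof -
      have "u powr (1/a) = x * y powr ((1 - a) / a)"
        using that by (simp add: u_def powr_mult powr_powr)
      moreover have "y powr ((1 - a) / a) * y powr (1 - 1/a) = 1"
        using that by (simp add: powr_add[symmetric] field_simps)
      ultimately show ?thesis by (simp add: mult.assoc)
    qed
    moreover have "u powr (1/a) * y powr (1 - 1/a) \<le> (1/a) * u + (1 - 1/a) * y"
      using that \<open>0 < u\<close> by (intro Youngs_inequality_0) auto
    ultimately have "a * x \<le> a * ((1/a) * u + (1 - 1/a) * y)"
      using that by simp
    also have "\<dots> = u + (a - 1) * y"
      using that by (simp add: field_simps)
    finally show ?thesis by (simp add: u_def algebra_simps)
  qed
  show ?thesis
    using a gt1[of a x y] gt1[of "1 - a" y x] assms by (auto simp: algebra_simps)
qed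

text \<open>Both tangent bounds below come from the 1-homogeneity of \<open>(p, q) \<mapsto> p\<^sup>\<alpha> q\<^sup>1\<^sup>-\<^sup>\<alpha>\<close>:
  rescaling by a reference point \<open>(x, y)\<close> reduces them to the (reverse) Young inequality.\<close>

lemma powr_weighted_product_rescale:
  fixes a p q x y :: real
  assumes "0 < x" "0 < y" "0 \<le> p" "0 \<le> q"
  shows "p powr a * q powr (1 - a) = x powr a * y powr (1 - a) * ((p / x) powr a * (q / y) powr (1 - a))"
  using assms by (simp add: powr_divide)

lemma alpha_integrand_le_tangent:
  fixes a p q x y :: real
  assumes a: "0 < a" "a < 1" and xy: "0 < x" "0 < y" and pq: "0 \<le> p" "0 \<le> q"
  shows "alpha_integrand a p q \<le> ennreal (x powr a * y powr (1 - a) * (a * (p / x) + (1 - a) * (q / y)))"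
proof (cases "0 < p \<and> 0 < q")
  case True
  have "(p / x) powr a * (q / y) powr (1 - a) \<le> a * (p / x) + (1 - a) * (q / y)"
    using True xy a by (intro Youngs_inequality_0) auto
  then show ?thesis
    using True xy pq
    by (auto simp: alpha_integrand_def powr_weighted_product_rescale[of x y p q] intro!: ennreal_leI)
next
  case False
  then show ?thesis using a pq by (auto simp: alpha_integrand_def)
qed

lemma alpha_integrand_ge_tangent:
  fixes a p q x y :: real
  assumes a: "a < 0 \<or> 1 < a" and xy: "0 < x" "0 < y" and pq: "0 \<le> p" "0 \<le> q"
  shows "ennreal (x powr a * y powr (1 - a) * (a * (p / x) + (1 - a) * (q / y))) \<le> alpha_integrand a p q"
proof -
  define K where "K = x powr a * y powr (1 - a)"
  have "0 < K" using xy by (simp add: K_def)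
  consider "0 < p" "0 < q" | "p = 0" "q = 0" | "p = 0" "0 < q" | "0 < p" "q = 0"
    using pq by linarith
  then show ?thesis
  proof cases
    case 1
    have "a * (p / x) + (1 - a) * (q / y) \<le> (p / x) powr a * (q / y) powr (1 - a)"
      using 1 xy a by (intro Youngs_inequality_reverse) auto
    then show ?thesis
      using 1 xy \<open>0 < K\<close>
      by (auto simp: alpha_integrand_def powr_weighted_product_rescale[of x y p q] K_def[symmetric]
          intro!: ennreal_leI)
  next
    case 2
    then show ?thesis by (simp add: alpha_integrand_def)
  next
    case 3
    have "1 < a \<Longrightarrow> K * ((1 - a) * q) / y \<le> 0"
      using 3 xy \<open>0 < K\<close> by (intro divide_nonpos_pos mult_nonneg_nonpos mult_nonpos_nonneg) auto
    then show ?thesis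
      using 3 a by (auto simp: alpha_integrand_def K_def[symmetric] ennreal_neg)
  next
    case 4
    have "a < 0 \<Longrightarrow> K * (a * p) / x \<le> 0"
      using 4 xy \<open>0 < K\<close> by (intro divide_nonpos_pos mult_nonneg_nonpos mult_nonpos_nonneg) auto
    then show ?thesis
      using 4 a by (auto simp: alpha_integrand_def K_def[symmetric] ennreal_neg)
  qed
qed

lemma alpha_integrand_zero_arg:
  "0 < a \<Longrightarrow> a < 1 \<Longrightarrow> p = 0 \<or> q = 0 \<Longrightarrow> alpha_integrand a p q = 0"
  by (auto simp: alpha_integrand_def)

lemma tangent_pair_sum:
  fixes a p p' q q' :: real
  assumes "0 < p + p'" "0 < q + q'"
  shows "K * (a * (p / (p + p')) + (1 - a) * (q / (q + q')))
       + K * (a * (p' / (p + p')) + (1 - a) * (q' / (q + q'))) = K"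
proof -
  have "p / (p + p') + p' / (p + p') = 1" "q / (q + q') + q' / (q + q') = 1"
    using assms by (simp_all add: add_divide_distrib[symmetric])
  moreover have "K * (a * (p / (p + p')) + (1 - a) * (q / (q + q')))
       + K * (a * (p' / (p + p')) + (1 - a) * (q' / (q + q')))
      = K * (a * (p / (p + p') + p' / (p + p')) + (1 - a) * (q / (q + q') + q' / (q + q')))"
    by (simp only: distrib_left)
  ultimately show ?thesis by simp
qed

lemma alpha_integrand_pair_le:
  fixes a p p' q q' :: real
  assumes a: "0 < a" "a < 1" and nonneg: "0 \<le> p" "0 \<le> p'" "0 \<le> q" "0 \<le> q'"
  shows "alpha_integrand a p q + alpha_integrand a p' q' \<le> ennreal ((p + p') powr a * (q + q') powr (1 - a))"
proof (cases "0 < p + p' \<and> 0 < q + q'")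
  case True
  define K where "K = (p + p') powr a * (q + q') powr (1 - a)"
  define T where "T u v = K * (a * (u / (p + p')) + (1 - a) * (v / (q + q')))" for u v
  have T_nonneg: "0 \<le> T u v" if "0 \<le> u" "0 \<le> v" for u v
    using True a that by (simp add: T_def K_def)
  have sum: "T p q + T p' q' = K"
    unfolding T_def by (rule tangent_pair_sum) (use True in auto)
  have "alpha_integrand a p q + alpha_integrand a p' q' \<le> ennreal (T p q) + ennreal (T p' q')"
    using True a nonneg unfolding T_def K_def by (intro add_mono alpha_integrand_le_tangent) auto
  also have "\<dots> = ennreal K"
    using nonneg T_nonneg by (simp flip: sum)
  finally show ?thesis by (simp add: K_def)
next
  case False
  then have "(p = 0 \<and> p' = 0) \<or> (q = 0 \<and> q' = 0)" using nonneg by linarith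
  then show ?thesis using a by (auto simp: alpha_integrand_zero_arg)
qed

lemma alpha_integrand_pair_ge:
  fixes a p p' q q' :: real
  assumes a: "a < 0 \<or> 1 < a" and nonneg: "0 \<le> p" "0 \<le> p'" "0 \<le> q" "0 \<le> q'"
  shows "ennreal ((p + p') powr a * (q + q') powr (1 - a)) \<le> alpha_integrand a p q + alpha_integrand a p' q'"
proof (cases "0 < p + p' \<and> 0 < q + q'")
  case True
  define K where "K = (p + p') powr a * (q + q') powr (1 - a)"
  define T where "T u v = K * (a * (u / (p + p')) + (1 - a) * (v / (q + q')))" for u v
  have sum: "T p q + T p' q' = K"
    unfolding T_def by (rule tangent_pair_sum) (use True in auto)
  have "ennreal K \<le> ennreal (T p q) + ennreal (T p' q')"
    using ennreal_plus_le[of "T p q" "T p' q'"] by (simp only: sum)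
  also have "\<dots> \<le> alpha_integrand a p q + alpha_integrand a p' q'"
    using True a nonneg unfolding T_def K_def by (intro add_mono alpha_integrand_ge_tangent) auto
  finally show ?thesis by (simp add: K_def)
next
  case False
  then have "p + p' = 0 \<or> q + q' = 0" using nonneg by linarith
  then show ?thesis by auto
qed

lemma alpha_integrand_proportional:
  fixes a c p s :: real
  assumes "0 < c" "0 \<le> p" "0 < s"
  shows "alpha_integrand a p (c * (p / s)) = ennreal (s powr a * c powr (1 - a) * (p / s))"
proof (cases "p = 0")
  case False
  then have "0 < p / s" using assms by simp
  then have "p powr a * (c * (p / s)) powr (1 - a) = s powr a * c powr (1 - a) * (p / s)"
    using assms powr_weighted_product_rescale[of s c p "c * (p / s)" a]
    by (simp add: powr_add[symmetric])
  then show ?thesis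
    using assms \<open>0 < p / s\<close> by (simp add: alpha_integrand_def)
qed (simp add: alpha_integrand_def)

lemma alpha_integrand_pair_skew_weight:
  fixes a c p p' :: real
  assumes "0 < c" "0 \<le> p" "0 \<le> p'" "0 < p + p'"
  shows "alpha_integrand a p (c * skew_weight p p') + alpha_integrand a p' (c * (1 - skew_weight p p'))
       = ennreal ((p + p') powr a * c powr (1 - a))"
proof -
  define K where "K = (p + p') powr a * c powr (1 - a)"
  have w: "skew_weight p p' = p / (p + p')" "1 - skew_weight p p' = p' / (p + p')"
    using skew_weight_proportional[OF assms(2-4)] by auto
  have "alpha_integrand a p (c * skew_weight p p') = ennreal (K * (p / (p + p')))"
    unfolding K_def w(1) using assms by (intro alpha_integrand_proportional) auto
  moreover have "alpha_integrand a p' (c * (1 - skew_weight p p')) = ennreal (K * (p' / (p + p')))"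
    unfolding K_def w(2) using assms by (intro alpha_integrand_proportional) auto
  moreover have "K * (p / (p + p')) + K * (p' / (p + p')) = K"
    using assms by (simp add: distrib_left[symmetric] add_divide_distrib[symmetric])
  moreover have "0 \<le> K" by (simp add: K_def)
  ultimately show ?thesis
    using assms by (simp add: K_def flip: ennreal_plus)
qed

lemma alpha_integrand_pair_le_skew_weight:
  fixes a c p p' w :: real
  assumes a: "0 < a" "a < 1" and nonneg: "0 \<le> c" "0 \<le> p" "0 \<le> p'" and w: "0 \<le> w" "w \<le> 1"
  shows "alpha_integrand a p (c * w) + alpha_integrand a p' (c * (1 - w))
       \<le> alpha_integrand a p (c * skew_weight p p') + alpha_integrand a p' (c * (1 - skew_weight p p'))"
proof (cases "0 < c \<and> 0 < p + p'")
  case True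
  have c_split: "c * w + c * (1 - w) = c"
    by (simp add: algebra_simps)
  have "alpha_integrand a p (c * w) + alpha_integrand a p' (c * (1 - w))
      \<le> ennreal ((p + p') powr a * c powr (1 - a))"
    using a nonneg w alpha_integrand_pair_le[of a p p' "c * w" "c * (1 - w)", unfolded c_split] by simp
  also have "\<dots> = alpha_integrand a p (c * skew_weight p p') + alpha_integrand a p' (c * (1 - skew_weight p p'))"
    using True nonneg by (intro alpha_integrand_pair_skew_weight[symmetric]) auto
  finally show ?thesis .
next
  case False
  then have "c = 0 \<or> (p = 0 \<and> p' = 0)" using nonneg by linarith
  then show ?thesis using a by (auto simp: alpha_integrand_zero_arg)
qed

lemma alpha_integrand_pair_skew_weight_le:
  fixes a c p p' w :: real
  assumes a: "a < 0 \<or> 1 < a" and nonneg: "0 \<le> c" "0 \<le> p" "0 \<le> p'" and w: "0 \<le> w" "w \<le> 1"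
  shows "alpha_integrand a p (c * skew_weight p p') + alpha_integrand a p' (c * (1 - skew_weight p p'))
       \<le> alpha_integrand a p (c * w) + alpha_integrand a p' (c * (1 - w))"
proof -
  consider "c = 0" | "0 < c" "p = 0" "p' = 0" | "0 < c" "0 < p + p'"
    using nonneg by linarith
  then show ?thesis
  proof cases
    case 1
    then show ?thesis by simp
  next
    case 2
    then have "0 < c * w \<or> 0 < c * (1 - w)" using w by (cases "w = 0") auto
    then show ?thesis
      using 2 a by (auto simp: alpha_integrand_def skew_weight_def)
  next
    case 3
    have c_split: "c * w + c * (1 - w) = c"
      by (simp add: algebra_simps)
    have "ennreal ((p + p') powr a * c powr (1 - a))
        \<le> alpha_integrand a p (c * w) + alpha_integrand a p' (c * (1 - w))"
      using a nonneg w alpha_integrand_pair_ge[of a p p' "c * w" "c * (1 - w)", unfolded c_split] by simp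
    moreover have "alpha_integrand a p (c * skew_weight p p') + alpha_integrand a p' (c * (1 - skew_weight p p'))
        = ennreal ((p + p') powr a * c powr (1 - a))"
      using 3 nonneg by (intro alpha_integrand_pair_skew_weight) auto
    ultimately show ?thesis by simp
  qed
qed

definition alpha_affinity ::
  "real \<Rightarrow> 'a::euclidean_space set \<Rightarrow> ('a \<Rightarrow> real) \<Rightarrow> ('a \<Rightarrow> real) \<Rightarrow> ennreal" where
  "alpha_affinity \<alpha> \<Theta> p q = (\<integral>\<^sup>+ t\<in>\<Theta>. alpha_integrand \<alpha> (p t) (q t) \<partial>lborel)"

lemma measurable_alpha_integrand [measurable]:
  assumes [measurable]: "g \<in> borel_measurable M" "h \<in> borel_measurable M"
  shows "(\<lambda>t. alpha_integrand a (g t) (h t)) \<in> borel_measurable M"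
  unfolding alpha_integrand_def by measurable

lemma D_alpha_le_of_alpha_affinity_ge:
  assumes "0 < \<alpha>" "\<alpha> < 1" "alpha_affinity \<alpha> \<Theta> p q' \<le> alpha_affinity \<alpha> \<Theta> p q"
  shows "D_alpha \<alpha> \<Theta> p q \<le> D_alpha \<alpha> \<Theta> p q'"
proof -
  have "1 - enn2ereal (alpha_affinity \<alpha> \<Theta> p q) \<le> 1 - enn2ereal (alpha_affinity \<alpha> \<Theta> p q')"
    using assms(3) by (intro ereal_minus_mono) (auto simp: less_eq_ennreal.rep_eq[symmetric])
  then show ?thesis
    using assms(1,2) unfolding D_alpha_def alpha_affinity_def[symmetric]
    by (intro ereal_mult_left_mono) auto
qed

lemma D_alpha_le_of_alpha_affinity_le:
  assumes "\<alpha> < 0 \<or> 1 < \<alpha>" "alpha_affinity \<alpha> \<Theta> p q \<le> alpha_affinity \<alpha> \<Theta> p q'"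
  shows "D_alpha \<alpha> \<Theta> p q \<le> D_alpha \<alpha> \<Theta> p q'"
proof -
  have "1 - enn2ereal (alpha_affinity \<alpha> \<Theta> p q') \<le> 1 - enn2ereal (alpha_affinity \<alpha> \<Theta> p q)"
    using assms(2) by (intro ereal_minus_mono) (auto simp: less_eq_ennreal.rep_eq[symmetric])
  moreover have "1 / (\<alpha> * (1 - \<alpha>)) < 0"
    using assms(1) by (auto simp: divide_less_0_iff mult_less_0_iff)
  moreover have "ereal k * x \<le> ereal k * y" if "k < 0" "y \<le> x" for k and x y :: ereal
    using that by (cases x; cases y) (auto simp: mult_left_mono_neg)
  ultimately show ?thesis
    unfolding D_alpha_def alpha_affinity_def[symmetric] by blast
qed

lemma D_TV_le_of_nn_integral_le:
  assumes "(\<integral>\<^sup>+ t\<in>\<Theta>. ennreal \<bar>p t - q t\<bar> \<partial>lborel) \<le> (\<integral>\<^sup>+ t\<in>\<Theta>. ennreal \<bar>p t - q' t\<bar> \<partial>lborel)"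
  shows "D_TV \<Theta> p q \<le> D_TV \<Theta> p q'"
  using assms unfolding D_TV_def
  by (intro ereal_mult_left_mono) (auto simp: less_eq_ennreal.rep_eq[symmetric])

context reflection_symmetric
begin

lemma skew_familyE:
  assumes "q \<in> skew_family \<Theta> th f"
  obtains w where "w \<in> borel_measurable borel"
    and "\<And>t. t \<in> \<Theta> \<Longrightarrow> 0 \<le> w t \<and> w t \<le> 1"
    and "\<And>t. t \<in> \<Theta> \<Longrightarrow> w (refl_pt th t) = 1 - w t"
    and "\<And>t. t \<in> \<Theta> \<Longrightarrow> q t = 2 * f t * w t"
proof -
  obtain w where "w \<in> borel_measurable lborel"
    and "\<forall>t\<in>\<Theta>. 0 \<le> w t \<and> w t \<le> 1 \<and> w t = 1 - w (refl_pt th t)"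
    and "\<forall>t\<in>\<Theta>. q t = 2 * f t * w t"
    using assms unfolding skew_family_def by blast
  then show thesis
    by (intro that[of w]) auto
qed

lemma skew_weight_refl_pt:
  assumes "\<And>t. t \<in> \<Theta> \<Longrightarrow> 0 \<le> P t" and "t \<in> \<Theta>"
  shows "skew_weight (P (refl_pt th t)) (P (refl_pt th (refl_pt th t))) = 1 - skew_weight (P t) (P (refl_pt th t))"
  unfolding refl_pt_refl_pt by (rule skew_weight_swap) (use assms refl_pt_mem in auto)

lemma skew_weight_in_skew_family:
  assumes [measurable]: "P \<in> borel_measurable borel" and P_nonneg: "\<And>t. t \<in> \<Theta> \<Longrightarrow> 0 \<le> P t"
  shows "(\<lambda>t. 2 * f t * skew_weight (P t) (P (refl_pt th t))) \<in> skew_family \<Theta> th f"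
  unfolding skew_family_def
proof (intro CollectI exI conjI ballI)
  fix t assume "t \<in> \<Theta>"
  then have "0 \<le> P t" "0 \<le> P (refl_pt th t)"
    using P_nonneg refl_pt_mem by auto
  then show "0 \<le> skew_weight (P t) (P (refl_pt th t))" "skew_weight (P t) (P (refl_pt th t)) \<le> 1"
    "skew_weight (P t) (P (refl_pt th t)) = 1 - skew_weight (P (refl_pt th t)) (P (refl_pt th (refl_pt th t)))"
    by (simp_all add: skew_weight_bounds skew_weight_swap[of "P (refl_pt th t)" "P t"])
qed auto

lemma set_nn_integral_le_by_weight_pairs:
  fixes G :: "real \<Rightarrow> real \<Rightarrow> ennreal" and P f w w' :: "'a \<Rightarrow> real"
  assumes [measurable]: "case_prod G \<in> borel_measurable (borel \<Otimes>\<^sub>M borel)"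
    "P \<in> borel_measurable borel" "f \<in> borel_measurable borel"
    "w \<in> borel_measurable borel" "w' \<in> borel_measurable borel"
    and f_sym: "\<And>t. t \<in> \<Theta> \<Longrightarrow> f (refl_pt th t) = f t"
    and w_refl: "\<And>t. t \<in> \<Theta> \<Longrightarrow> w (refl_pt th t) = 1 - w t"
    and w'_refl: "\<And>t. t \<in> \<Theta> \<Longrightarrow> w' (refl_pt th t) = 1 - w' t"
    and pair_le: "\<And>t. t \<in> \<Theta> \<Longrightarrow>
      G (P t) (2 * f t * w t) + G (P (refl_pt th t)) (2 * f t * (1 - w t))
      \<le> G (P t) (2 * f t * w' t) + G (P (refl_pt th t)) (2 * f t * (1 - w' t))"
  shows "(\<integral>\<^sup>+ t\<in>\<Theta>. G (P t) (2 * f t * w t) \<partial>lborel) \<le> (\<integral>\<^sup>+ t\<in>\<Theta>. G (P t) (2 * f t * w' t) \<partial>lborel)"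
proof (rule set_nn_integral_le_by_refl_pt_pairs)
  fix t assume "t \<in> \<Theta>"
  then show "G (P t) (2 * f t * w t) + G (P (refl_pt th t)) (2 * f (refl_pt th t) * w (refl_pt th t))
      \<le> G (P t) (2 * f t * w' t) + G (P (refl_pt th t)) (2 * f (refl_pt th t) * w' (refl_pt th t))"
    using pair_le by (simp add: f_sym w_refl w'_refl)
qed measurable

lemma D_TV_skew_weight_le:
  assumes [measurable]: "P \<in> borel_measurable borel" "f \<in> borel_measurable borel"
    and P_nonneg: "\<And>t. t \<in> \<Theta> \<Longrightarrow> 0 \<le> P t"
    and f_sym: "\<And>t. t \<in> \<Theta> \<Longrightarrow> f (refl_pt th t) = f t"
    and q: "q \<in> skew_family \<Theta> th f"
  shows "D_TV \<Theta> P (\<lambda>t. 2 * f t * skew_weight (P t) (P (refl_pt th t))) \<le> D_TV \<Theta> P q"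
proof -
  obtain w where [measurable]: "w \<in> borel_measurable borel"
    and w_refl: "\<And>t. t \<in> \<Theta> \<Longrightarrow> w (refl_pt th t) = 1 - w t"
    and q_eq: "\<And>t. t \<in> \<Theta> \<Longrightarrow> q t = 2 * f t * w t"
    using q by (elim skew_familyE) blast
  define w_opt where "w_opt t = skew_weight (P t) (P (refl_pt th t))" for t
  have [measurable]: "w_opt \<in> borel_measurable borel"
    unfolding w_opt_def by measurable
  have "(\<integral>\<^sup>+ t\<in>\<Theta>. ennreal \<bar>P t - 2 * f t * w_opt t\<bar> \<partial>lborel)
      \<le> (\<integral>\<^sup>+ t\<in>\<Theta>. ennreal \<bar>P t - 2 * f t * w t\<bar> \<partial>lborel)"
  proof (rule set_nn_integral_le_by_weight_pairs[where G = "\<lambda>p q. ennreal \<bar>p - q\<bar>"])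
    fix t assume "t \<in> \<Theta>"
    then show "w_opt (refl_pt th t) = 1 - w_opt t"
      unfolding w_opt_def using P_nonneg by (rule skew_weight_refl_pt[rotated])
    have "0 \<le> P t" "0 \<le> P (refl_pt th t)"
      using \<open>t \<in> \<Theta>\<close> P_nonneg refl_pt_mem by auto
    then show "ennreal \<bar>P t - 2 * f t * w_opt t\<bar> + ennreal \<bar>P (refl_pt th t) - 2 * f t * (1 - w_opt t)\<bar>
        \<le> ennreal \<bar>P t - 2 * f t * w t\<bar> + ennreal \<bar>P (refl_pt th t) - 2 * f t * (1 - w t)\<bar>"
      unfolding w_opt_def by (simp flip: ennreal_plus add: ennreal_leI abs_pair_skew_weight_le)
  qed (measurable, fact f_sym, fact w_refl)
  also have "\<dots> = (\<integral>\<^sup>+ t\<in>\<Theta>. ennreal \<bar>P t - q t\<bar> \<partial>lborel)"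
    by (intro set_nn_integral_cong) (auto simp: q_eq)
  finally show ?thesis
    unfolding w_opt_def by (rule D_TV_le_of_nn_integral_le)
qed

lemma D_alpha_skew_weight_le:
  assumes [measurable]: "P \<in> borel_measurable borel" "f \<in> borel_measurable borel"
    and P_nonneg: "\<And>t. t \<in> \<Theta> \<Longrightarrow> 0 \<le> P t"
    and f_nonneg: "\<And>t. t \<in> \<Theta> \<Longrightarrow> 0 \<le> f t"
    and f_sym: "\<And>t. t \<in> \<Theta> \<Longrightarrow> f (refl_pt th t) = f t"
    and q: "q \<in> skew_family \<Theta> th f"
    and \<alpha>: "\<alpha> \<noteq> 0" "\<alpha> \<noteq> 1"
  shows "D_alpha \<alpha> \<Theta> P (\<lambda>t. 2 * f t * skew_weight (P t) (P (refl_pt th t))) \<le> D_alpha \<alpha> \<Theta> P q"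
proof -
  obtain w where [measurable]: "w \<in> borel_measurable borel"
    and w_bounds: "\<And>t. t \<in> \<Theta> \<Longrightarrow> 0 \<le> w t \<and> w t \<le> 1"
    and w_refl: "\<And>t. t \<in> \<Theta> \<Longrightarrow> w (refl_pt th t) = 1 - w t"
    and q_eq: "\<And>t. t \<in> \<Theta> \<Longrightarrow> q t = 2 * f t * w t"
    using q by (elim skew_familyE) blast
  define w_opt where "w_opt t = skew_weight (P t) (P (refl_pt th t))" for t
  have P_pair_nonneg: "0 \<le> P t" "0 \<le> P (refl_pt th t)" if "t \<in> \<Theta>" for t
    using that P_nonneg refl_pt_mem by auto
  have [measurable]: "w_opt \<in> borel_measurable borel"
    unfolding w_opt_def by measurable
  have w_opt_refl: "w_opt (refl_pt th t) = 1 - w_opt t" if "t \<in> \<Theta>" for t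
    unfolding w_opt_def using P_nonneg that by (rule skew_weight_refl_pt)
  have affinity_q: "alpha_affinity \<alpha> \<Theta> P q = (\<integral>\<^sup>+ t\<in>\<Theta>. alpha_integrand \<alpha> (P t) (2 * f t * w t) \<partial>lborel)"
    unfolding alpha_affinity_def by (intro set_nn_integral_cong) (auto simp: q_eq)
  have pair_args: "0 \<le> 2 * f t" "0 \<le> P t" "0 \<le> P (refl_pt th t)" "0 \<le> w t" "w t \<le> 1"
    if "t \<in> \<Theta>" for t
    using that f_nonneg P_pair_nonneg w_bounds by auto
  consider "0 < \<alpha>" "\<alpha> < 1" | "\<alpha> < 0 \<or> 1 < \<alpha>"
    using \<alpha> by linarith
  then show ?thesis
  proof cases
    case 1
    have "alpha_affinity \<alpha> \<Theta> P q \<le> alpha_affinity \<alpha> \<Theta> P (\<lambda>t. 2 * f t * w_opt t)"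
      unfolding affinity_q unfolding alpha_affinity_def
    proof (rule set_nn_integral_le_by_weight_pairs[where G = "alpha_integrand \<alpha>"])
      fix t assume "t \<in> \<Theta>"
      then show "alpha_integrand \<alpha> (P t) (2 * f t * w t) + alpha_integrand \<alpha> (P (refl_pt th t)) (2 * f t * (1 - w t))
          \<le> alpha_integrand \<alpha> (P t) (2 * f t * w_opt t) + alpha_integrand \<alpha> (P (refl_pt th t)) (2 * f t * (1 - w_opt t))"
        unfolding w_opt_def using pair_args 1 by (intro alpha_integrand_pair_le_skew_weight) auto
    qed (measurable, fact f_sym, fact w_refl w_opt_refl, fact w_refl w_opt_refl)
    then show ?thesis
      using 1 unfolding w_opt_def by (rule D_alpha_le_of_alpha_affinity_ge[rotated 2])
  next
    case 2
    have "alpha_affinity \<alpha> \<Theta> P (\<lambda>t. 2 * f t * w_opt t) \<le> alpha_affinity \<alpha> \<Theta> P q"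
      unfolding affinity_q unfolding alpha_affinity_def
    proof (rule set_nn_integral_le_by_weight_pairs[where G = "alpha_integrand \<alpha>"])
      fix t assume "t \<in> \<Theta>"
      then show "alpha_integrand \<alpha> (P t) (2 * f t * w_opt t) + alpha_integrand \<alpha> (P (refl_pt th t)) (2 * f t * (1 - w_opt t))
          \<le> alpha_integrand \<alpha> (P t) (2 * f t * w t) + alpha_integrand \<alpha> (P (refl_pt th t)) (2 * f t * (1 - w t))"
        unfolding w_opt_def using pair_args 2 by (intro alpha_integrand_pair_skew_weight_le) auto
    qed (measurable, fact f_sym, fact w_refl w_opt_refl, fact w_refl w_opt_refl)
    then show ?thesis
      using 2 unfolding w_opt_def by (rule D_alpha_le_of_alpha_affinity_le[rotated])
  qed
qed

end

lemma measurable_posterior [measurable]: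
  assumes [measurable]: "prior \<in> borel_measurable borel" "L \<in> borel_measurable borel"
  shows "posterior \<Theta> prior L \<in> borel_measurable borel"
  unfolding posterior_def by measurable

lemma posterior_nonneg: "0 \<le> prior t \<Longrightarrow> 0 \<le> L t \<Longrightarrow> 0 \<le> posterior \<Theta> prior L t"
  by (simp add: posterior_def)

lemma wstar_eq_skew_weight_posterior:
  assumes "(\<integral>\<^sup>+ x\<in>\<Theta>. ennreal (prior x * L x) \<partial>lborel) \<noteq> 0"
    and "(\<integral>\<^sup>+ x\<in>\<Theta>. ennreal (prior x * L x) \<partial>lborel) \<noteq> \<infinity>"
  shows "wstar prior L th t = skew_weight (posterior \<Theta> prior L t) (posterior \<Theta> prior L (refl_pt th t))"
proof -
  have "enn2real (\<integral>\<^sup>+ x\<in>\<Theta>. ennreal (prior x * L x) \<partial>lborel) \<noteq> 0"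
    using assms by (simp add: enn2real_eq_0_iff)
  then show ?thesis
    by (simp add: posterior_def skew_weight_divide) (simp add: wstar_def skew_weight_def Let_def)
qed

theorem corollary1:
  fixes \<Theta> :: "'a::euclidean_space set"
    and prior L f :: "'a \<Rightarrow> real"
    and th :: 'a
  assumes Theta_meas: "\<Theta> \<in> sets lborel"
    and th_in: "th \<in> \<Theta>"
    and Theta_sym: "\<forall>t\<in>\<Theta>. refl_pt th t \<in> \<Theta>"
    and prior_meas: "prior \<in> borel_measurable lborel"
    and L_meas: "L \<in> borel_measurable lborel"
    and prior_nonneg: "\<forall>t\<in>\<Theta>. 0 \<le> prior t"
    and L_nonneg: "\<forall>t\<in>\<Theta>. 0 \<le> L t"
    and c_pos: "(\<integral>\<^sup>+ x\<in>\<Theta>. ennreal (prior x * L x) \<partial>lborel) \<noteq> 0"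
    and c_fin: "(\<integral>\<^sup>+ x\<in>\<Theta>. ennreal (prior x * L x) \<partial>lborel) \<noteq> \<infinity>"
    and f_meas: "f \<in> borel_measurable lborel"
    and f_nonneg: "\<forall>t\<in>\<Theta>. 0 \<le> f t"
    and f_int: "(\<integral>\<^sup>+ x\<in>\<Theta>. ennreal (f x) \<partial>lborel) = 1"
    and f_sym: "\<forall>t\<in>\<Theta>. f t = f (refl_pt th t)"
  shows "(\<lambda>t. 2 * f t * wstar prior L th t) \<in> skew_family \<Theta> th f
       \<and> is_arg_min (D_TV \<Theta> (posterior \<Theta> prior L)) (\<lambda>q. q \<in> skew_family \<Theta> th f)
            (\<lambda>t. 2 * f t * wstar prior L th t)
       \<and> (\<forall>\<alpha>::real. \<alpha> \<noteq> 0 \<and> \<alpha> \<noteq> 1 \<longrightarrow>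
            is_arg_min (D_alpha \<alpha> \<Theta> (posterior \<Theta> prior L)) (\<lambda>q. q \<in> skew_family \<Theta> th f)
              (\<lambda>t. 2 * f t * wstar prior L th t))"
proof -
  interpret reflection_symmetric \<Theta> th
    using Theta_meas Theta_sym by unfold_locales auto
  define P where "P = posterior \<Theta> prior L"
  have [measurable]: "prior \<in> borel_measurable borel" "L \<in> borel_measurable borel"
    using prior_meas L_meas by simp_all
  have f_borel: "f \<in> borel_measurable borel"
    using f_meas by simp
  have P_meas: "P \<in> borel_measurable borel"
    unfolding P_def by measurable
  have P_nonneg: "\<And>t. t \<in> \<Theta> \<Longrightarrow> 0 \<le> P t"
    using prior_nonneg L_nonneg by (simp add: P_def posterior_nonneg)
  have f_nonneg_on: "\<And>t. t \<in> \<Theta> \<Longrightarrow> 0 \<le> f t"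
    using f_nonneg by simp
  have f_refl: "\<And>t. t \<in> \<Theta> \<Longrightarrow> f (refl_pt th t) = f t"
    using f_sym by simp
  have q_star: "(\<lambda>t. 2 * f t * wstar prior L th t) = (\<lambda>t. 2 * f t * skew_weight (P t) (P (refl_pt th t)))"
    using c_pos c_fin by (simp add: P_def wstar_eq_skew_weight_posterior)
  have "(\<lambda>t. 2 * f t * skew_weight (P t) (P (refl_pt th t))) \<in> skew_family \<Theta> th f"
    using P_meas P_nonneg by (rule skew_weight_in_skew_family)
  moreover have "D_TV \<Theta> P (\<lambda>t. 2 * f t * skew_weight (P t) (P (refl_pt th t))) \<le> D_TV \<Theta> P q"
    if "q \<in> skew_family \<Theta> th f" for q
    using P_meas f_borel P_nonneg f_refl that by (rule D_TV_skew_weight_le)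
  moreover have "D_alpha \<alpha> \<Theta> P (\<lambda>t. 2 * f t * skew_weight (P t) (P (refl_pt th t))) \<le> D_alpha \<alpha> \<Theta> P q"
    if "q \<in> skew_family \<Theta> th f" "\<alpha> \<noteq> 0" "\<alpha> \<noteq> 1" for q \<alpha>
    using P_meas f_borel P_nonneg f_nonneg_on f_refl that by (rule D_alpha_skew_weight_le)
  ultimately show ?thesis
    unfolding q_star P_def[symmetric] is_arg_min_linorder by blast
qed

end
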